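(* Let $$\tilde U(x)=\frac12+\frac{1}{2\sqrt2}+\sqrt{1-4x}\left(-\frac{1}{\sqrt2}+\log_2\!\left(\sqrt{1-4x}\right)+\frac14\right),$$ (principal branches, analytic for $|x|<1/4$). Then, as $n\to\infty$, $$E_n(\gamma)\sim\frac{[x^n]\tilde U(x)}{C^{(n)}},$$ where $E_n(\gamma)$ is the average of $\gamma(t)$ over all $t\in\mathcal{T}_n$ and $C^{(n)}=|\mathcal{T}_n|=[x^n]\frac{1-\sqrt{1-4x}}{2}$ is the Catalan number.
   Context: $\mathcal{T}_n$ is the set of ordered rooted binary trees (every internal node has exactly two ordered children) with $n$ leaves. A tree is a caterpillar if every node is either a leaf or has at least one leaf among its direct children. The subtree of $t$ at a node $v$ consists of $v$ and all its descendants, and $\gamma(t)$ is the largest number of leaves of a caterpillar occurring as the subtree of $t$ at some node. $[x^n]G(x)$ denotes the coefficient of $x^n$ in the power series $G$. *)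

theory Defs
  imports "HOL-Analysis.Analysis" "HOL-Library.Landau_Symbols"
begin

datatype btree = Leaf | Node btree btree

fun leaves :: "btree \<Rightarrow> nat" where
  "leaves Leaf = 1"
| "leaves (Node l r) = leaves l + leaves r"

definition trees :: "nat \<Rightarrow> btree set" where
  "trees n = {t. leaves t = n}"

fun caterpillar :: "btree \<Rightarrow> bool" where
  "caterpillar Leaf = True"
| "caterpillar (Node l r) = ((l = Leaf \<or> r = Leaf) \<and> caterpillar l \<and> caterpillar r)"

fun subtrees :: "btree \<Rightarrow> btree set" where
  "subtrees Leaf = {Leaf}"
| "subtrees (Node l r) = insert (Node l r) (subtrees l \<union> subtrees r)"

definition gamma :: "btree \<Rightarrow> nat" where
  "gamma t = Max (leaves ` {s \<in> subtrees t. caterpillar s})"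

definition avg_gamma :: "nat \<Rightarrow> real" where
  "avg_gamma n = (\<Sum>t\<in>trees n. real (gamma t)) / real (card (trees n))"

definition U_tilde :: "real \<Rightarrow> real" where
  "U_tilde x = 1/2 + 1 / (2 * sqrt 2)
     + sqrt (1 - 4*x) * (- 1 / sqrt 2 + log 2 (sqrt (1 - 4*x)) + 1/4)"

definition taylor_coeff :: "(real \<Rightarrow> real) \<Rightarrow> nat \<Rightarrow> real" where
  "taylor_coeff f n = (deriv ^^ n) f 0 / fact n"

end

theory Submission
  imports Defs "HOL-Computational_Algebra.Formal_Power_Series" "HOL-Real_Asymp.Real_Asymp"
    "HOL-Analysis.Harmonic_Numbers"
begin

(* Both sides of the asymptotic equivalence are shown to be asymptotic to log2 n.

   Let occ j t be the number of nodes of t whose subtree is a caterpillar with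
   j leaves; for j >= 1, occ j t > 0 iff j <= gamma t.  Splitting trees at the root turns sums
   over T_n into convolutions, and uniqueness of solutions of convolution recurrences identifies
   the first moment  M_j(n) = 2^(j-2) (n+1-j) C_(n+1-j)  and the second factorial moment
   D_j(n) = 4^(j-2) p (p-1) C_p  (p = n - 2j + 2)  of occ j over T_n, where C_n = |T_n| are the
   Catalan numbers, (n+1) C_(n+1) = (4n-2) C_n.  The first moment method (gamma t <= k unless
   occ j t > 0 for some j > k) gives  E_n(gamma) <= log2 n + O(sqrt (log n)),  and the second
   moment method for j = floor (log2 n - sqrt (log2 n)) gives the matching lower bound.

   For x < 1/4, U_tilde combines (1-4x)^(1/2) and (1-4x)^(1/2) ln (1-4x); its n-th
   derivative has a closed form, whence  [x^n] U_tilde / C_n = const + H_n / ln 2  with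
   H_n = (SUM k<n. 1/(k - 1/2)) = ln n + O(1). *)

section \<open>Trees and their root decomposition\<close>

lemma leaves_pos: "1 \<le> leaves t"
  by (induction t) auto

lemma trees_0: "trees 0 = {}"
  using leaves_pos by (auto simp: trees_def Suc_le_eq)

lemma trees_1: "trees (Suc 0) = {Leaf}"
proof -
  have "t = Leaf" if "leaves t = 1" for t
  proof (cases t)
    case (Node l r) then show ?thesis using that leaves_pos[of l] leaves_pos[of r] by simp
  qed
  then show ?thesis by (auto simp: trees_def)
qed

lemma trees_decomp:
  assumes "n \<noteq> 1"
  shows "trees n = (\<lambda>(i, l, r). Node l r) ` (SIGMA i:{..n}. trees i \<times> trees (n - i))"
proof (intro equalityI subsetI)
  fix t assume t: "t \<in> trees n"
  show "t \<in> (\<lambda>(i, l, r). Node l r) ` (SIGMA i:{..n}. trees i \<times> trees (n - i))"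
  proof (cases t)
    case Leaf then show ?thesis using t assms by (simp add: trees_def)
  next
    case (Node l r)
    then have "(leaves l, l, r) \<in> (SIGMA i:{..n}. trees i \<times> trees (n - i))"
      using t by (auto simp: trees_def)
    then show ?thesis using Node by force
  qed
qed (auto simp: trees_def)

lemma finite_trees: "finite (trees n)"
proof (induction n rule: less_induct)
  case (less n)
  show ?case
  proof (cases "n = 1")
    case False
    have "finite (trees i \<times> trees (n - i))" if "i \<le> n" for i
      using that less by (cases "i = 0 \<or> i = n") (auto simp: trees_0)
    then show ?thesis using trees_decomp[OF False] by auto
  qed (simp add: trees_1)
qed

lemma sum_trees_decomp:
  fixes G :: "btree \<Rightarrow> real"
  shows "(\<Sum>t\<in>trees n. G t) = (if n = 1 then G Leaf else 0)
           + (\<Sum>i\<le>n. \<Sum>l\<in>trees i. \<Sum>r\<in>trees (n - i). G (Node l r))"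
proof (cases "n = 1")
  case True
  then show ?thesis by (simp add: atMost_Suc trees_0 trees_1)
next
  case False
  have inj: "inj_on (\<lambda>(i, l, r). Node l r) (SIGMA i:{..n}. trees i \<times> trees (n - i))"
    by (auto simp: inj_on_def trees_def)
  have "(\<Sum>t\<in>trees n. G t) = (\<Sum>(i, l, r)\<in>(SIGMA i:{..n}. trees i \<times> trees (n - i)). G (Node l r))"
    by (subst trees_decomp[OF False], subst sum.reindex[OF inj]) (simp add: case_prod_unfold)
  also have "\<dots> = (\<Sum>i\<le>n. \<Sum>l\<in>trees i. \<Sum>r\<in>trees (n - i). G (Node l r))"
    by (subst sum.Sigma[symmetric]) (auto simp: finite_trees sum.cartesian_product)
  finally show ?thesis using False by simp
qed

lemma double_sum_add:
  "(\<Sum>l\<in>A. \<Sum>r\<in>B. f l + g r) = sum f A * real (card B) + real (card A) * (sum g B :: real)"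
  by (simp add: sum.distrib sum_distrib_right mult.commute)

section \<open>Convolution recurrences\<close>

text \<open>Cauchy product of coefficient sequences, and shifting a sequence by \<open>d\<close> places
  (multiplication of the generating function by \<open>x\<^sup>d\<close>).\<close>

definition conv :: "(nat \<Rightarrow> real) \<Rightarrow> (nat \<Rightarrow> real) \<Rightarrow> nat \<Rightarrow> real" where
  "conv f g n = (\<Sum>i\<le>n. f i * g (n - i))"

definition shift :: "nat \<Rightarrow> (nat \<Rightarrow> real) \<Rightarrow> nat \<Rightarrow> real" where
  "shift d f n = (if d \<le> n then f (n - d) else 0)"

lemma conv_commute: "conv f g = conv g f"
proof
  fix n show "conv f g n = conv g f n"
    unfolding conv_def by (rule sum.reindex_bij_witness[where i="\<lambda>i. n - i" and j="\<lambda>i. n - i"]) auto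
qed

lemma conv_scale_left: "conv (\<lambda>m. c * f m) g = (\<lambda>n. c * conv f g n)"
  by (simp add: conv_def sum_distrib_left mult.assoc fun_eq_iff)

lemma conv_scale_right: "conv f (\<lambda>m. c * g m) = (\<lambda>n. c * conv f g n)"
  using conv_scale_left[of c g f] by (simp add: conv_commute)

lemma shift_add: "shift (a + b) f = shift a (shift b f)"
  by (auto simp: shift_def fun_eq_iff)

lemma conv_shift_left: "conv (shift d f) g = shift d (conv f g)"
proof (induction d)
  case 0 then show ?case by (simp add: shift_def fun_eq_iff)
next
  case (Suc d)
  have "conv (shift 1 h) g = shift 1 (conv h g)" for h
  proof
    fix n show "conv (shift 1 h) g n = shift 1 (conv h g) n"
    proof (cases n)
      case (Suc m)
      have "conv (shift 1 h) g n = (\<Sum>i\<le>m. h i * g (m - i))"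
        unfolding conv_def Suc sum.atMost_Suc_shift by (simp add: shift_def)
      then show ?thesis by (simp add: Suc shift_def conv_def)
    qed (simp add: conv_def shift_def)
  qed
  then show ?case using Suc shift_add[of 1 d] by simp
qed

lemma conv_shift_right: "conv g (shift d f) = shift d (conv g f)"
  using conv_shift_left[of d f g] by (simp add: conv_commute)

lemma conv_shift_both: "conv (shift a f) (shift b g) = shift (a + b) (conv f g)"
proof -
  have "conv (shift a f) (shift b g) = shift a (conv f (shift b g))" by (rule conv_shift_left)
  also have "\<dots> = shift (a + b) (conv f g)" by (simp only: conv_shift_right shift_add)
  finally show ?thesis .
qed

lemma conv_quadratic_unique:
  assumes "X 0 = 0" "Y 0 = 0"
    and "\<And>n. X n = e n + conv X X n" "\<And>n. Y n = e n + conv Y Y n"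
  shows "X n = Y n"
proof (induction n rule: less_induct)
  case (less n)
  have "X i * X (n - i) = Y i * Y (n - i)" if "i \<le> n" for i
    using that less assms(1,2) by (cases "i = 0 \<or> i = n") auto
  then have "conv X X n = conv Y Y n" unfolding conv_def by (intro sum.cong) auto
  then show ?case using assms(3,4) by metis
qed

text \<open>A linear recurrence \<open>X = e + X * c + c * X\<close> with \<open>c 0 = 0\<close> has at most one solution:
  \<open>X n\<close> only depends on earlier values.\<close>

lemma conv_linear_unique:
  assumes "c 0 = 0"
    and "\<And>n. X n = e n + conv X c n + conv c X n" "\<And>n. Y n = e n + conv Y c n + conv c Y n"
  shows "X n = Y n"
proof (induction n rule: less_induct)
  case (less n)
  have left: "X i * c (n - i) = Y i * c (n - i)" if "i \<le> n" for i
    using that less assms(1) by (cases "i = n") auto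
  have right: "c i * X (n - i) = c i * Y (n - i)" if "i \<le> n" for i
    using that less assms(1) by (cases "i = 0") auto
  have "conv X c n = conv Y c n" "conv c X n = conv c Y n"
    unfolding conv_def using left right by (auto intro: sum.cong)
  then show ?case using assms(2,3) by metis
qed

lemma shift_linear_rec:
  assumes "\<And>n. X n = e n + conv X c n + conv c X n"
  shows "shift d (\<lambda>m. a * X m) n
    = shift d (\<lambda>m. a * e m) n + conv (shift d (\<lambda>m. a * X m)) c n + conv c (shift d (\<lambda>m. a * X m)) n"
  using assms[of "n - d"]
  by (simp add: conv_shift_left conv_shift_right conv_scale_left conv_scale_right shift_def algebra_simps)

section \<open>Catalan numbers\<close>

definition catalan :: "nat \<Rightarrow> real" where
  "catalan n = real (card (trees n))"

lemma catalan_0: "catalan 0 = 0"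
  by (simp add: catalan_def trees_0)

lemma catalan_rec: "catalan n = of_bool (n = 1) + conv catalan catalan n"
  using sum_trees_decomp[of "\<lambda>_. 1" n] by (simp add: conv_def catalan_def)

text \<open>The comb with \<open>k + 1\<close> leaves shows that \<open>T\<^sub>n\<close> is nonempty for \<open>n \<ge> 1\<close>.\<close>

fun comb :: "nat \<Rightarrow> btree" where
  "comb 0 = Leaf"
| "comb (Suc k) = Node Leaf (comb k)"

lemma leaves_comb: "leaves (comb k) = Suc k"
  by (induction k) auto

lemma catalan_pos: "1 \<le> n \<Longrightarrow> 0 < catalan n"
proof -
  assume "1 \<le> n"
  then have "comb (n - 1) \<in> trees n" by (simp add: trees_def leaves_comb)
  then show ?thesis using finite_trees card_gt_0_iff by (fastforce simp: catalan_def)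
qed

text \<open>\<open>sqrt_coeff n\<close> is the coefficient of \<open>x\<^sup>n\<close> in \<open>sqrt (1 - 4 x)\<close>; its square is \<open>1 - 4 x\<close>.\<close>

definition sqrt_coeff :: "nat \<Rightarrow> real" where
  "sqrt_coeff n = ((1/2) gchoose n) * (-4)^n"

lemma conv_sqrt_coeff: "conv sqrt_coeff sqrt_coeff n = (if n = 0 then 1 else if n = 1 then -4 else 0)"
proof -
  have "conv sqrt_coeff sqrt_coeff n
      = (-4)^n * (\<Sum>k\<in>{0..n}. ((1/2::real) gchoose k) * ((1/2) gchoose (n - k)))"
    unfolding conv_def sqrt_coeff_def sum_distrib_left atMost_atLeast0
    by (intro sum.cong refl) (auto simp: power_add[symmetric])
  also have "\<dots> = (-4)^n * ((1::real) gchoose n)"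
    by (subst gbinomial_Vandermonde) simp
  also have "((1::real) gchoose n) = of_nat (1 choose n)"
    using binomial_gbinomial[of 1 n, where 'a=real] by simp
  finally show ?thesis by (cases n) (auto simp: binomial_eq_0)
qed

lemma catalan_closed: "catalan n = (if n = 0 then 0 else - sqrt_coeff n / 2)"
proof (rule conv_quadratic_unique[OF catalan_0 _ catalan_rec])
  define c where "c n = (if n = 0 then 0 else - sqrt_coeff n / 2)" for n
  have c_alt: "c n = - (sqrt_coeff n - (if n = 0 then 1 else 0)) / 2" for n
    by (simp add: c_def sqrt_coeff_def)
  fix n
  have "conv c c n = (\<Sum>i\<le>n. sqrt_coeff i * sqrt_coeff (n - i) - (if i = 0 then sqrt_coeff (n - i) else 0)
        - (if i = n then sqrt_coeff i else 0) + (if i = 0 then (if n = 0 then 1 else 0) else 0)) / 4"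
    unfolding conv_def c_alt sum_divide_distrib
    by (intro sum.cong refl) (auto simp: field_simps)
  also have "\<dots> = (conv sqrt_coeff sqrt_coeff n - 2 * sqrt_coeff n + of_bool (n = 0)) / 4"
    by (simp add: sum.distrib sum_subtractf conv_def)
  finally show "c n = of_bool (n = 1) + conv c c n"
    by (cases "n = 0") (auto simp: conv_sqrt_coeff c_def sqrt_coeff_def)
qed (simp add: sqrt_coeff_def)

lemma sqrt_coeff_Suc: "real (Suc n) * sqrt_coeff (Suc n) = (4 * real n - 2) * sqrt_coeff n"
proof -
  have E: "real (Suc n) * ((1/2::real) gchoose Suc n) = (1/2 - real n) * ((1/2) gchoose n)"
    using gbinomial_mult_1[of "1/2::real" n] by (simp add: algebra_simps)
  have "real (Suc n) * sqrt_coeff (Suc n) = (-4)^Suc n * (real (Suc n) * ((1/2::real) gchoose Suc n))"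
    unfolding sqrt_coeff_def by (simp only: mult_ac)
  also have "\<dots> = (4 * real n - 2) * sqrt_coeff n"
    unfolding E sqrt_coeff_def by (simp add: algebra_simps)
  finally show ?thesis .
qed

lemma catalan_Suc: "1 \<le> n \<Longrightarrow> catalan (Suc n) = (4 - 6 / real (Suc n)) * catalan n"
  using sqrt_coeff_Suc[of n] by (simp add: catalan_closed field_simps)

lemma catalan_growth_upper: "1 \<le> m \<Longrightarrow> catalan (m + d) \<le> 4^d * catalan m"
proof (induction d)
  case (Suc d)
  have "catalan (m + Suc d) = (4 - 6 / real (Suc (m + d))) * catalan (m + d)"
    using Suc.prems catalan_Suc[of "m + d"] by simp
  also have "\<dots> \<le> 4 * catalan (m + d)"
    using catalan_pos[of "m + d"] Suc.prems by (intro mult_right_mono) auto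
  finally show ?case using Suc by simp
qed simp

lemma catalan_growth_lower:
  assumes "1 \<le> m"
  shows "4^d * (1 - 3 * real d / (2 * (real m + 1))) * catalan m \<le> catalan (m + d)"
proof -
  define q where "q = 4 - 6 / real (Suc m)"
  have q0: "0 \<le> q" using assms by (simp add: q_def field_simps)
  have "q^d * catalan m \<le> catalan (m + d)"
  proof (induction d)
    case (Suc d)
    have "q^Suc d * catalan m \<le> q * catalan (m + d)"
      using Suc q0 by (simp add: mult.assoc mult_left_mono)
    also have "\<dots> \<le> (4 - 6 / real (Suc (m + d))) * catalan (m + d)"
      using catalan_pos[of "m + d"] assms by (intro mult_right_mono) (auto simp: q_def frac_le)
    also have "\<dots> = catalan (m + Suc d)" using catalan_Suc[of "m + d"] assms by simp
    finally show ?case .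
  qed simp
  moreover have "4^d * (1 - 3 * real d / (2 * (real m + 1))) \<le> q^d"
  proof -
    define y :: real where "y = 3 / (2 * (real m + 1))"
    have "1 + real d * (- y) \<le> (1 + (- y))^d"
      by (rule Bernoulli_inequality) (use assms in \<open>simp add: y_def\<close>)
    then have "4^d * (1 - real d * y) \<le> 4^d * (1 - y)^d" by simp
    also have "\<dots> = q^d" by (simp add: q_def y_def field_simps power_mult_distrib[symmetric])
    finally show ?thesis by (simp add: y_def mult.commute[of 3])
  qed
  ultimately show ?thesis using catalan_pos[OF assms] by (meson mult_right_mono order_trans less_imp_le)
qed

text \<open>Trees with one marked leaf, and with an ordered pair of distinct marked leaves.  Splitting
  at the root distributes the marked leaves over the two subtrees.\<close>

definition marked1 :: "nat \<Rightarrow> real" where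
  "marked1 n = real n * catalan n"

definition marked2 :: "nat \<Rightarrow> real" where
  "marked2 n = real n * (real n - 1) * catalan n"

lemma marked1_rec: "marked1 n = of_bool (n = 1) + conv marked1 catalan n + conv catalan marked1 n"
proof -
  have "conv marked1 catalan n + conv catalan marked1 n = real n * conv catalan catalan n"
    unfolding conv_def marked1_def sum.distrib[symmetric] sum_distrib_left
    by (intro sum.cong refl) (auto simp: algebra_simps)
  also have "\<dots> = real n * (catalan n - of_bool (n = 1))" using catalan_rec[of n] by simp
  finally show ?thesis by (auto simp: marked1_def)
qed

lemma marked2_rec:
  "marked2 n = 2 * conv marked1 marked1 n + conv marked2 catalan n + conv catalan marked2 n"
proof -
  have "2 * conv marked1 marked1 n + conv marked2 catalan n + conv catalan marked2 n
      = real n * (real n - 1) * conv catalan catalan n"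
    unfolding conv_def marked1_def marked2_def sum.distrib[symmetric] sum_distrib_left
    by (intro sum.cong refl) (auto simp: algebra_simps)
  also have "\<dots> = real n * (real n - 1) * (catalan n - of_bool (n = 1))"
    using catalan_rec[of n] by simp
  finally show ?thesis by (auto simp: marked2_def)
qed

section \<open>Occurrences of caterpillars and their moments\<close>

definition root_occ :: "nat \<Rightarrow> btree \<Rightarrow> nat" where
  "root_occ j t = of_bool (caterpillar t \<and> leaves t = j)"

fun occ :: "nat \<Rightarrow> btree \<Rightarrow> nat" where
  "occ j Leaf = root_occ j Leaf"
| "occ j (Node l r) = root_occ j (Node l r) + occ j l + occ j r"

lemma occ_small: "leaves t < j \<Longrightarrow> occ j t = 0"
  by (induction t) (auto simp: root_occ_def)

definition caterpillars :: "nat \<Rightarrow> nat" where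
  "caterpillars j = card {s \<in> trees j. caterpillar s}"

lemma trees_2: "trees 2 = {Node Leaf Leaf}"
proof -
  have "t = Node Leaf Leaf" if "leaves t = 2" for t
  proof (cases t)
    case (Node l r)
    then have "leaves l = 1" "leaves r = 1"
      using that leaves_pos[of l] leaves_pos[of r] by auto
    then show ?thesis using Node trees_1 by (auto simp: trees_def)
  qed (use that in simp)
  then show ?thesis by (auto simp: trees_def)
qed

text \<open>A caterpillar with \<open>j + 1 \<ge> 3\<close> leaves is a caterpillar with \<open>j\<close> leaves plus a leaf
  attached on the left or on the right of the root.\<close>

lemma caterpillars_Suc:
  assumes "2 \<le> j"
  shows "caterpillars (Suc j) = 2 * caterpillars j"
proof -
  let ?A = "{s \<in> trees j. caterpillar s}"
  have eq: "{s \<in> trees (Suc j). caterpillar s} = Node Leaf ` ?A \<union> (\<lambda>s. Node s Leaf) ` ?A"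
  proof (intro equalityI subsetI)
    fix s assume s: "s \<in> {s \<in> trees (Suc j). caterpillar s}"
    then obtain l r where "s = Node l r" using assms by (cases s) (auto simp: trees_def)
    then show "s \<in> Node Leaf ` ?A \<union> (\<lambda>s. Node s Leaf) ` ?A" using s
      by (auto simp: trees_def)
  qed (auto simp: trees_def)
  have "Node Leaf ` ?A \<inter> (\<lambda>s. Node s Leaf) ` ?A = {}"
    using assms by (auto simp: trees_def)
  then have "caterpillars (Suc j) = card (Node Leaf ` ?A) + card ((\<lambda>s. Node s Leaf) ` ?A)"
    unfolding caterpillars_def eq using finite_trees by (intro card_Un_disjoint) auto
  also have "\<dots> = 2 * caterpillars j"
    unfolding caterpillars_def by (subst card_image, simp add: inj_on_def)+ simp
  finally show ?thesis .
qed

lemma caterpillars_eq: "2 \<le> j \<Longrightarrow> caterpillars j = 2 ^ (j - 2)"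
proof (induction j rule: nat_induct_at_least)
  case base
  have "{s \<in> trees 2. caterpillar s} = {Node Leaf Leaf}" by (auto simp: trees_2)
  then show ?case by (simp add: caterpillars_def)
next
  case (Suc j)
  then have "Suc j - 2 = Suc (j - 2)" by simp
  then show ?case using Suc by (simp add: caterpillars_Suc)
qed

definition occ_total :: "nat \<Rightarrow> nat \<Rightarrow> real" where
  "occ_total j n = (\<Sum>t\<in>trees n. real (occ j t))"

definition occ_pairs :: "nat \<Rightarrow> nat \<Rightarrow> real" where
  "occ_pairs j n = (\<Sum>t\<in>trees n. real (occ j t) * (real (occ j t) - 1))"

lemma sum_root_occ:
  "(\<Sum>t\<in>trees n. real (root_occ j t)) = of_bool (n = j) * real (caterpillars j)"
proof (cases "n = j")
  case True
  have "(\<Sum>t\<in>trees n. real (root_occ j t)) = (\<Sum>t\<in>trees n. of_bool (caterpillar t))"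
    by (intro sum.cong refl) (auto simp: root_occ_def trees_def True)
  also have "\<dots> = real (caterpillars j)" using finite_trees True
    by (simp add: caterpillars_def Collect_conj_eq Int_commute trees_def)
  finally show ?thesis using True by simp
qed (auto simp: root_occ_def trees_def intro: sum.neutral)

lemma occ_total_rec:
  "occ_total j n = of_bool (n = j) * real (caterpillars j)
     + conv (occ_total j) catalan n + conv catalan (occ_total j) n"
proof -
  define below where "below t = (case t of Leaf \<Rightarrow> 0 | Node l r \<Rightarrow> real (occ j l) + real (occ j r))"
    for t
  have split: "real (occ j t) = real (root_occ j t) + below t" for t
    by (cases t) (auto simp: below_def)
  have "(\<Sum>t\<in>trees n. below t)
      = (\<Sum>i\<le>n. \<Sum>l\<in>trees i. \<Sum>r\<in>trees (n - i). real (occ j l) + real (occ j r))"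
    using sum_trees_decomp[of below n] by (simp add: below_def)
  also have "\<dots> = conv (occ_total j) catalan n + conv catalan (occ_total j) n"
    unfolding double_sum_add conv_def occ_total_def catalan_def sum.distrib
    by (simp add: sum_distrib_left sum_distrib_right mult_ac)
  finally show ?thesis unfolding occ_total_def split sum.distrib sum_root_occ by simp
qed

text \<open>Exact first moment: an occurrence of a caterpillar with \<open>j\<close> leaves corresponds to a
  caterpillar shape and a tree with \<open>n + 1 - j\<close> leaves with one marked leaf.\<close>

lemma occ_total_closed:
  assumes "1 \<le> j"
  shows "occ_total j n = shift (j - 1) (\<lambda>m. real (caterpillars j) * marked1 m) n"
proof (rule conv_linear_unique[OF catalan_0 occ_total_rec])
  fix n
  have "shift (j - 1) (\<lambda>m. real (caterpillars j) * of_bool (m = 1)) n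
      = of_bool (n = j) * real (caterpillars j)"
    using assms by (auto simp: shift_def)
  then show "shift (j - 1) (\<lambda>m. real (caterpillars j) * marked1 m) n
      = of_bool (n = j) * real (caterpillars j)
        + conv (shift (j - 1) (\<lambda>m. real (caterpillars j) * marked1 m)) catalan n
        + conv catalan (shift (j - 1) (\<lambda>m. real (caterpillars j) * marked1 m)) n"
    using shift_linear_rec[OF marked1_rec, of "j - 1" "real (caterpillars j)" n] by simp
qed

lemma double_sum_add_mult:
  "(\<Sum>l\<in>A. \<Sum>r\<in>B. f l + g r + 2 * (h l * k r))
    = sum f A * real (card B) + real (card A) * sum g B + 2 * (sum h A * (sum k B :: real))"
proof -
  have "(\<Sum>l\<in>A. \<Sum>r\<in>B. f l + g r + 2 * (h l * k r))
      = (\<Sum>l\<in>A. \<Sum>r\<in>B. f l + g r) + 2 * (\<Sum>l\<in>A. \<Sum>r\<in>B. h l * k r)"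
    by (simp add: sum.distrib sum_distrib_left)
  then show ?thesis by (simp only: double_sum_add sum_product[symmetric])
qed

text \<open>Ordered pairs of distinct occurrences in \<open>Node l r\<close>: both in \<open>l\<close>, both in \<open>r\<close>, or one in
  each; an occurrence at the root excludes all others.\<close>

lemma occ_pairs_Node:
  "real (occ j (Node l r)) * (real (occ j (Node l r)) - 1)
    = real (occ j l) * (real (occ j l) - 1) + real (occ j r) * (real (occ j r) - 1)
      + 2 * (real (occ j l) * real (occ j r))"
proof (cases "root_occ j (Node l r) = 0")
  case True
  then show ?thesis by (simp add: algebra_simps)
next
  case False
  then have "leaves l < j" "leaves r < j"
    using leaves_pos[of l] leaves_pos[of r] by (auto simp: root_occ_def)
  then show ?thesis using False by (simp add: occ_small root_occ_def)
qed

lemma occ_pairs_rec: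
  "occ_pairs j n = 2 * conv (occ_total j) (occ_total j) n
     + conv (occ_pairs j) catalan n + conv catalan (occ_pairs j) n"
proof -
  have "occ_pairs j n = (\<Sum>i\<le>n. \<Sum>l\<in>trees i. \<Sum>r\<in>trees (n - i).
       real (occ j l) * (real (occ j l) - 1) + real (occ j r) * (real (occ j r) - 1)
       + 2 * (real (occ j l) * real (occ j r)))"
    unfolding occ_pairs_def by (subst sum_trees_decomp) (simp only: occ_pairs_Node, simp add: root_occ_def)
  also have "\<dots> = (\<Sum>i\<le>n. occ_pairs j i * catalan (n - i) + catalan i * occ_pairs j (n - i)
      + 2 * (occ_total j i * occ_total j (n - i)))"
    unfolding double_sum_add_mult occ_pairs_def occ_total_def catalan_def ..
  finally show ?thesis by (simp add: conv_def sum.distrib sum_distrib_left)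
qed

text \<open>Exact second factorial moment: pairs of occurrences correspond to two caterpillar shapes
  and a tree with \<open>n - 2 (j - 1)\<close> leaves with an ordered pair of marked leaves.\<close>

lemma occ_pairs_closed:
  assumes "1 \<le> j"
  shows "occ_pairs j n = shift (2 * (j - 1)) (\<lambda>m. real (caterpillars j)^2 * marked2 m) n"
proof (rule conv_linear_unique[OF catalan_0 occ_pairs_rec])
  let ?a = "real (caterpillars j)"
  fix n
  have M: "occ_total j = shift (j - 1) (\<lambda>m. ?a * marked1 m)"
    using occ_total_closed[OF assms] by (simp add: fun_eq_iff)
  have "shift (2 * (j - 1)) (\<lambda>m. ?a^2 * (2 * conv marked1 marked1 m)) n
      = 2 * conv (occ_total j) (occ_total j) n"
    unfolding M conv_shift_both conv_scale_left conv_scale_right mult_2[where 'a=nat]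
    using assms by (simp add: shift_def power2_eq_square)
  then show "shift (2 * (j - 1)) (\<lambda>m. ?a^2 * marked2 m) n
      = 2 * conv (occ_total j) (occ_total j) n
        + conv (shift (2 * (j - 1)) (\<lambda>m. ?a^2 * marked2 m)) catalan n
        + conv catalan (shift (2 * (j - 1)) (\<lambda>m. ?a^2 * marked2 m)) n"
    using shift_linear_rec[OF marked2_rec, of "2 * (j - 1)" "?a^2" n] by simp
qed

section \<open>The largest caterpillar subtree and caterpillar occurrences\<close>

lemma finite_subtrees: "finite (subtrees t)"
  by (induction t) auto

lemma Leaf_in_subtrees: "Leaf \<in> subtrees t"
  by (induction t) auto

lemma leaves_subtree: "s \<in> subtrees t \<Longrightarrow> leaves s \<le> leaves t"
  by (induction t) (auto intro: le_trans)

lemma gamma_attained: "\<exists>s\<in>subtrees t. caterpillar s \<and> leaves s = gamma t"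
proof -
  have "gamma t \<in> leaves ` {s \<in> subtrees t. caterpillar s}"
    unfolding gamma_def using Leaf_in_subtrees[of t] finite_subtrees[of t] by (intro Max_in) auto
  then show ?thesis by auto
qed

lemma gamma_ge: "s \<in> subtrees t \<Longrightarrow> caterpillar s \<Longrightarrow> leaves s \<le> gamma t"
  unfolding gamma_def using finite_subtrees[of t] by (auto intro!: Max_ge)

lemma gamma_le_leaves: "gamma t \<le> leaves t"
  using gamma_attained[of t] leaves_subtree by metis

lemma occ_pos_imp_subtree: "0 < occ j t \<Longrightarrow> \<exists>s\<in>subtrees t. caterpillar s \<and> leaves s = j"
  by (induction t) (auto simp: root_occ_def split: if_splits)

lemma caterpillar_occ_pos: "caterpillar s \<Longrightarrow> 1 \<le> j \<Longrightarrow> j \<le> leaves s \<Longrightarrow> 0 < occ j s"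
proof (induction s)
  case Leaf then show ?case by (simp add: root_occ_def)
next
  case (Node l r)
  show ?case
  proof (cases "j = leaves (Node l r)")
    case True then show ?thesis using Node.prems by (simp add: root_occ_def)
  next
    case False
    then have "j < leaves l + leaves r" using Node.prems by simp
    moreover have "l = Leaf \<or> r = Leaf" "caterpillar l" "caterpillar r" using Node.prems(1) by auto
    ultimately show ?thesis using Node.IH Node.prems(2) by auto
  qed
qed

lemma occ_mono: "s \<in> subtrees t \<Longrightarrow> occ j s \<le> occ j t"
  by (induction t) (auto intro: le_trans)

lemma occ_pos_iff_le_gamma:
  assumes "1 \<le> j"
  shows "0 < occ j t \<longleftrightarrow> j \<le> gamma t"
proof
  assume "0 < occ j t"
  then show "j \<le> gamma t" using occ_pos_imp_subtree gamma_ge by blast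
next
  assume "j \<le> gamma t"
  obtain s where s: "s \<in> subtrees t" "caterpillar s" "leaves s = gamma t"
    using gamma_attained by blast
  then have "0 < occ j s" using assms \<open>j \<le> gamma t\<close> by (intro caterpillar_occ_pos) auto
  then show "0 < occ j t" using occ_mono[OF s(1), of j] by simp
qed

text \<open>First moment bound: \<open>gamma t \<le> k\<close> unless caterpillars of some size \<open>j \<in> (k, K]\<close> occur,
  and \<open>gamma t \<le> leaves t\<close> is only needed when caterpillars of size \<open>K\<close> occur.\<close>

lemma gamma_upper_bound:
  assumes "k < K"
  shows "real (gamma t) \<le> real k + (\<Sum>j\<in>{k<..K}. real (occ j t)) + real (leaves t) * real (occ K t)"
proof -
  have s0: "0 \<le> (\<Sum>j\<in>{k<..K}. real (occ j t))" by (intro sum_nonneg) auto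
  consider "gamma t \<le> k" | "K \<le> gamma t" | "k < gamma t" "gamma t < K" by linarith
  then show ?thesis
  proof cases
    case 1 then show ?thesis using s0 by (smt (verit) of_nat_0_le_iff of_nat_le_iff zero_le_mult_iff)
  next
    case 2
    then have "1 \<le> occ K t" using assms occ_pos_iff_le_gamma[of K t] by simp
    then have "real (leaves t) \<le> real (leaves t) * real (occ K t)"
      using mult_left_mono[of 1 "real (occ K t)" "real (leaves t)"] by simp
    then show ?thesis using s0 gamma_le_leaves[of t] by (smt (verit) of_nat_0_le_iff of_nat_le_iff)
  next
    case 3
    have "real (gamma t) - real k = (\<Sum>j\<in>{k<..gamma t}. (1::real))" using 3 by simp
    also have "\<dots> \<le> (\<Sum>j\<in>{k<..gamma t}. real (occ j t))"
    proof (intro sum_mono)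
      fix j assume "j \<in> {k<..gamma t}"
      then show "1 \<le> real (occ j t)" using occ_pos_iff_le_gamma[of j t] by auto
    qed
    also have "\<dots> \<le> (\<Sum>j\<in>{k<..K}. real (occ j t))"
      using 3 by (intro sum_mono2) auto
    finally show ?thesis by (smt (verit) of_nat_0_le_iff zero_le_mult_iff)
  qed
qed

section \<open>Estimates for the moments\<close>

lemma occ_total_eq:
  assumes "2 \<le> j" "j \<le> n + 1"
  shows "occ_total j n = 2^(j - 2) * (real (n + 1 - j) * catalan (n + 1 - j))"
proof -
  have "j - 1 \<le> n" "n - (j - 1) = n + 1 - j" using assms by auto
  then show ?thesis using assms by (simp add: occ_total_closed caterpillars_eq shift_def marked1_def)
qed

lemma four_power: "(4::real)^k = (2^k)^2"
  by (simp add: power2_eq_square power_mult_distrib[symmetric])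

lemma occ_pairs_eq:
  assumes "2 \<le> j" "2 * (j - 1) \<le> n"
  defines "p \<equiv> n - 2 * (j - 1)"
  shows "occ_pairs j n = 4^(j - 2) * (real p * (real p - 1) * catalan p)"
proof -
  have "real (caterpillars j)^2 = 4^(j - 2)"
    using caterpillars_eq[OF assms(1)] by (simp add: four_power)
  then show ?thesis using assms by (simp add: occ_pairs_closed shift_def marked2_def)
qed

lemma occ_mean_upper:
  assumes "2 \<le> j" "4 * j \<le> n"
  shows "occ_total j n / catalan n \<le> 2 * real n / 2^j"
proof -
  obtain i where i: "j = i + 2" using assms(1) by (metis add.commute le_Suc_ex)
  define m where "m = n + 1 - j"
  have m1: "1 \<le> m" and mn: "m \<le> n" and mi: "m + (i + 1) = n" and im: "3 * (i + 1) \<le> m + 1"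
    using assms i by (auto simp: m_def)
  have "4^(i+1) * (1/2) * catalan m \<le> 4^(i+1) * (1 - 3 * real (i+1) / (2 * (real m + 1))) * catalan m"
    using im catalan_pos[OF m1] by (intro mult_right_mono mult_left_mono) (auto simp: field_simps)
  also have "\<dots> \<le> catalan n" using catalan_growth_lower[OF m1, of "i+1"] mi by simp
  finally have growth: "4^(i+1) * (1/2) * catalan m \<le> catalan n" .
  have "occ_total j n = 2^i * (real m * catalan m)"
    using occ_total_eq[of j n] assms i by (simp add: m_def)
  also have "\<dots> \<le> 2^i * (real n * catalan m)"
    using mn catalan_pos[OF m1] by (intro mult_left_mono mult_right_mono) auto
  also have "\<dots> = (2 * real n / 2^j) * (4^(i+1) * (1/2) * catalan m)"
    by (simp add: i power_add field_simps power_mult_distrib[symmetric])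
  also have "\<dots> \<le> (2 * real n / 2^j) * catalan n"
    using growth by (intro mult_left_mono) auto
  finally show ?thesis using catalan_pos[of n] assms by (simp add: pos_divide_le_eq)
qed

lemma occ_mean_lower:
  assumes "2 \<le> j" "j \<le> n"
  shows "real (n + 1 - j) / 2^j \<le> occ_total j n / catalan n"
proof -
  obtain i where i: "j = i + 2" using assms(1) by (metis add.commute le_Suc_ex)
  define m where "m = n + 1 - j"
  have m1: "1 \<le> m" and mi: "m + (i + 1) = n" using assms i by (auto simp: m_def)
  have M: "occ_total j n = 2^i * (real m * catalan m)"
    using occ_total_eq[of j n] assms i by (simp add: m_def)
  have "real m / 2^j * catalan n \<le> real m / 2^j * (4^(i+1) * catalan m)"
    using catalan_growth_upper[OF m1, of "i+1"] mi by (intro mult_left_mono) auto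
  also have "\<dots> = occ_total j n"
    unfolding M by (simp add: i power_add field_simps power_mult_distrib[symmetric])
  finally show ?thesis using catalan_pos[of n] assms by (simp add: m_def pos_le_divide_eq)
qed

text \<open>The correction factor of \<open>catalan_growth_lower\<close> for \<open>j - 1\<close> steps starting from
  \<open>n - 2 (j - 1)\<close> leaves is at least \<open>1 - 3 j / n\<close>.\<close>

lemma growth_correction_bound:
  assumes "2 \<le> j" "4 * j \<le> n"
  defines "p \<equiv> n - 2 * (j - 1)"
  shows "1 - 3 * real j / real n \<le> 1 - 3 * real (j - 1) / (2 * (real p + 1))"
proof -
  have p_eq: "real p + 1 = real n - 2 * real j + 3" and j_eq: "real (j - 1) = real j - 1"
    using assms by (auto simp: p_def of_nat_diff)
  have "2 * real j * (real p + 1) - real (j - 1) * real n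
      = real j * (real n - 4 * real j) + real n + 6 * real j"
    unfolding p_eq j_eq by (simp add: algebra_simps)
  moreover have "0 \<le> real j * (real n - 4 * real j)" using assms by simp
  ultimately have "real (j - 1) * real n \<le> 2 * real j * (real p + 1)" by linarith
  moreover have "1 \<le> p" using assms by (simp add: p_def)
  ultimately show ?thesis using assms by (simp add: field_simps)
qed

lemma occ_pairs_ratio:
  assumes "2 \<le> j" "4 * j \<le> n"
  shows "occ_pairs j n * catalan n \<le> (occ_total j n)^2 / (1 - 3 * real j / real n)"
proof -
  define p where "p = n - 2 * (j - 1)"
  define m where "m = n + 1 - j"
  have p1: "1 \<le> p" and mp: "p + (j - 1) = m" and mn: "m + (j - 1) = n" and pm: "p \<le> m"
    using assms by (auto simp: p_def m_def)
  have m1: "1 \<le> m" using p1 pm by simp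
  define \<theta> where "\<theta> = 1 - 3 * real (j - 1) / (2 * (real p + 1))"
  have "1 - 3 * real j / real n \<le> \<theta>"
    using growth_correction_bound[OF assms] by (simp add: \<theta>_def p_def)
  moreover have pos: "0 < 1 - 3 * real j / real n" using assms by (simp add: field_simps)
  ultimately have \<theta>0: "0 < \<theta>" by linarith
  have low: "4^(j - 1) * \<theta> * catalan p \<le> catalan m"
    using catalan_growth_lower[OF p1, of "j - 1"] mp by (simp add: \<theta>_def)
  have up: "catalan n \<le> 4^(j - 1) * catalan m"
    using catalan_growth_upper[OF m1, of "j - 1"] mn by simp
  define A where "A = 4^(j - 2) * (real m)^2"
  have "occ_pairs j n * catalan n \<le> A * catalan p * catalan n"
  proof -
    have "real p * (real p - 1) \<le> real p * real p" by (simp add: mult_left_mono)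
    also have "\<dots> \<le> (real m)^2" using pm by (simp add: power2_eq_square mult_mono)
    finally have "real p * (real p - 1) \<le> (real m)^2" .
    then show ?thesis
      using occ_pairs_eq[of j n] assms catalan_pos[OF p1] catalan_pos[of n]
      by (simp add: A_def p_def mult_right_mono)
  qed
  also have "\<dots> \<le> A * catalan p * (4^(j - 1) * catalan m)"
    using up catalan_pos[OF p1] by (intro mult_left_mono) (auto simp: A_def)
  also have "\<dots> = A * catalan m * (4^(j - 1) * \<theta> * catalan p) / \<theta>"
    using \<theta>0 by (simp add: field_simps)
  also have "\<dots> \<le> A * catalan m * catalan m / \<theta>"
    using low \<theta>0 catalan_pos[OF m1] by (intro divide_right_mono mult_left_mono) (auto simp: A_def)
  also have "\<dots> = (occ_total j n)^2 / \<theta>"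
  proof -
    have "occ_total j n = 2^(j - 2) * (real m * catalan m)"
      using occ_total_eq[of j n] assms by (simp add: m_def)
    then show ?thesis by (simp add: A_def four_power power2_eq_square algebra_simps)
  qed
  also have "\<dots> \<le> (occ_total j n)^2 / (1 - 3 * real j / real n)"
    using \<open>1 - 3 * real j / real n \<le> \<theta>\<close> pos by (intro divide_left_mono) auto
  finally show ?thesis .
qed

section \<open>Bounds on the average of gamma\<close>

lemma second_moment_method:
  fixes X :: "'a \<Rightarrow> nat"
  assumes "finite A" and pos: "0 < (\<Sum>a\<in>A. real (X a))"
  shows "real (card {a\<in>A. X a = 0}) / real (card A)
    \<le> (\<Sum>a\<in>A. real (X a) * (real (X a) - 1)) * real (card A) / (\<Sum>a\<in>A. real (X a))^2
      + real (card A) / (\<Sum>a\<in>A. real (X a)) - 1"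
proof -
  define C where "C = real (card A)"
  define S where "S = (\<Sum>a\<in>A. real (X a))"
  define F where "F = (\<Sum>a\<in>A. real (X a) * (real (X a) - 1))"
  define \<mu> where "\<mu> = S / C"
  have "A \<noteq> {}" using pos by auto
  then have C0: "0 < C" using assms(1) by (simp add: C_def card_gt_0_iff)
  have \<mu>0: "0 < \<mu>" using pos C0 by (simp add: \<mu>_def S_def)
  have "real (card {a\<in>A. X a = 0}) = (\<Sum>a\<in>A. of_bool (X a = 0))"
    using assms(1) by (simp add: Collect_conj_eq)
  also have "\<dots> \<le> (\<Sum>a\<in>A. (real (X a) - \<mu>)^2 / \<mu>^2)"
    by (intro sum_mono) (use \<mu>0 in auto)
  also have "\<dots> = (\<Sum>a\<in>A. real (X a) * (real (X a) - 1) + real (X a) - 2 * \<mu> * real (X a) + \<mu>^2) / \<mu>^2"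
    unfolding sum_divide_distrib by (intro sum.cong refl) (simp add: power2_eq_square algebra_simps)
  also have "\<dots> = (F + S - 2 * \<mu> * S + \<mu>^2 * C) / \<mu>^2"
    by (simp add: sum.distrib sum_subtractf F_def S_def C_def sum_distrib_left)
  finally have "real (card {a\<in>A. X a = 0}) / C \<le> (F + S - 2 * \<mu> * S + \<mu>^2 * C) / \<mu>^2 / C"
    using C0 by (intro divide_right_mono) auto
  also have "\<dots> = F * C / S^2 + C / S - 1"
    using C0 pos by (simp add: \<mu>_def S_def field_simps power2_eq_square)
  finally show ?thesis by (simp add: C_def S_def F_def)
qed

lemma avg_gamma_eq: "avg_gamma n = (\<Sum>t\<in>trees n. real (gamma t)) / catalan n"
  by (simp add: avg_gamma_def catalan_def)

text \<open>Lower bound: \<open>gamma t \<ge> j\<close> whenever a caterpillar with \<open>j\<close> leaves occurs in \<open>t\<close>.\<close>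

lemma avg_gamma_ge_occ:
  assumes "1 \<le> n"
  shows "real j * (1 - real (card {t\<in>trees n. occ j t = 0}) / catalan n) \<le> avg_gamma n"
proof -
  have C0: "0 < catalan n" using catalan_pos assms by simp
  have "(\<Sum>t\<in>trees n. real j * (1 - of_bool (occ j t = 0))) \<le> (\<Sum>t\<in>trees n. real (gamma t))"
  proof (intro sum_mono)
    fix t show "real j * (1 - of_bool (occ j t = 0)) \<le> real (gamma t)"
      using occ_pos_imp_subtree[of j t] gamma_ge by (cases "occ j t = 0") auto
  qed
  moreover have "(\<Sum>t\<in>trees n. real j * (1 - of_bool (occ j t = 0)))
      = real j * (catalan n - real (card {t\<in>trees n. occ j t = 0}))"
    using finite_trees
    by (simp add: sum_distrib_left[symmetric] sum_subtractf catalan_def Collect_conj_eq)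
  ultimately have "real j * (catalan n - real (card {t\<in>trees n. occ j t = 0})) / catalan n \<le> avg_gamma n"
    unfolding avg_gamma_eq using C0 by (intro divide_right_mono) auto
  then show ?thesis using C0 by (simp add: field_simps)
qed

lemma avg_gamma_lower_bound:
  assumes "2 \<le> j" "4 * j \<le> n"
  shows "real j * (2 - 1 / (1 - 3 * real j / real n) - 2 * 2^j / real n) \<le> avg_gamma n"
proof -
  define m where "m = n + 1 - j"
  have n1: "1 \<le> n" and m1: "1 \<le> real m" and nm: "real n \<le> 2 * real m"
    using assms by (auto simp: m_def)
  have C0: "0 < catalan n" using catalan_pos n1 by simp
  have mean: "real m / 2^j \<le> occ_total j n / catalan n"
    using occ_mean_lower[of j n] assms by (simp add: m_def)
  then have M0: "0 < occ_total j n"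
    using m1 C0 by (smt (verit) divide_le_0_iff zero_less_divide_iff zero_less_power)
  have "catalan n / occ_total j n \<le> 2^j / real m"
    using mean m1 M0 C0 by (simp add: field_simps)
  also have "\<dots> \<le> 2 * 2^j / real n"
    using nm m1 n1 by (simp add: field_simps)
  finally have inv_mean: "catalan n / occ_total j n \<le> 2 * 2^j / real n" .
  have "occ_pairs j n * catalan n / (occ_total j n)^2 \<le> 1 / (1 - 3 * real j / real n)"
    using occ_pairs_ratio[OF assms] M0 by (simp add: pos_divide_le_eq)
  moreover have "real (card {t\<in>trees n. occ j t = 0}) / catalan n
      \<le> occ_pairs j n * catalan n / (occ_total j n)^2 + catalan n / occ_total j n - 1"
    using second_moment_method[OF finite_trees, of "occ j" n] M0
    by (simp add: occ_pairs_def occ_total_def catalan_def)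
  ultimately have "real (card {t\<in>trees n. occ j t = 0}) / catalan n
      \<le> 1 / (1 - 3 * real j / real n) + 2 * 2^j / real n - 1"
    using inv_mean by linarith
  then have "real j * (2 - 1 / (1 - 3 * real j / real n) - 2 * 2^j / real n)
      \<le> real j * (1 - real (card {t\<in>trees n. occ j t = 0}) / catalan n)"
    by (intro mult_left_mono) auto
  also have "\<dots> \<le> avg_gamma n" by (rule avg_gamma_ge_occ[OF n1])
  finally show ?thesis .
qed

lemma geometric_tail: "(\<Sum>j\<in>{k<..k+d}. (1/2::real)^j) = (1/2)^k - (1/2)^(k+d)"
proof (induction d)
  case (Suc d)
  have "{k<..k + Suc d} = insert (Suc (k + d)) {k<..k+d}" by auto
  then show ?case using Suc by simp
qed simp

text \<open>Averaging \<open>gamma_upper_bound\<close> over \<open>T\<^sub>n\<close>.\<close>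

lemma avg_gamma_le_means:
  assumes "1 \<le> n" "k < K"
  shows "avg_gamma n
    \<le> real k + (\<Sum>j\<in>{k<..K}. occ_total j n / catalan n) + real n * (occ_total K n / catalan n)"
proof -
  have C0: "0 < catalan n" using catalan_pos assms by simp
  have "(\<Sum>t\<in>trees n. real (gamma t))
      \<le> (\<Sum>t\<in>trees n. real k + (\<Sum>j\<in>{k<..K}. real (occ j t)) + real (leaves t) * real (occ K t))"
    by (intro sum_mono gamma_upper_bound assms(2))
  also have "\<dots> = real k * catalan n + (\<Sum>j\<in>{k<..K}. occ_total j n) + real n * occ_total K n"
  proof -
    have "(\<Sum>t\<in>trees n. \<Sum>j\<in>{k<..K}. real (occ j t)) = (\<Sum>j\<in>{k<..K}. occ_total j n)"
      unfolding occ_total_def by (rule sum.swap)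
    moreover have "(\<Sum>t\<in>trees n. real (leaves t) * real (occ K t)) = real n * occ_total K n"
      unfolding occ_total_def sum_distrib_left by (intro sum.cong refl) (simp add: trees_def)
    ultimately show ?thesis by (simp add: sum.distrib catalan_def)
  qed
  finally have "avg_gamma n
      \<le> (real k * catalan n + (\<Sum>j\<in>{k<..K}. occ_total j n) + real n * occ_total K n) / catalan n"
    unfolding avg_gamma_eq using C0 by (intro divide_right_mono) auto
  also have "\<dots> = real k + (\<Sum>j\<in>{k<..K}. occ_total j n / catalan n) + real n * (occ_total K n / catalan n)"
    using C0 by (simp add: add_divide_distrib sum_divide_distrib)
  finally show ?thesis .
qed

lemma avg_gamma_upper_bound:
  assumes "1 \<le> k" "k < K" "4 * K \<le> n"
  shows "avg_gamma n \<le> real k + 2 * real n / 2^k + 2 * (real n)^2 / 2^K"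
proof -
  have "avg_gamma n
    \<le> real k + (\<Sum>j\<in>{k<..K}. occ_total j n / catalan n) + real n * (occ_total K n / catalan n)"
    using assms by (intro avg_gamma_le_means) auto
  also have "(\<Sum>j\<in>{k<..K}. occ_total j n / catalan n) \<le> (\<Sum>j\<in>{k<..K}. 2 * real n * (1/2)^j)"
  proof (intro sum_mono)
    fix j assume "j \<in> {k<..K}"
    then show "occ_total j n / catalan n \<le> 2 * real n * (1/2)^j"
      using occ_mean_upper[of j n] assms by (simp add: power_one_over)
  qed
  also have "\<dots> \<le> 2 * real n / 2^k"
  proof -
    obtain d where d: "K = k + d" using assms(2) by (metis less_imp_add_positive)
    have "(\<Sum>j\<in>{k<..K}. 2 * real n * (1/2)^j) = 2 * real n * ((1/2)^k - (1/2)^(k+d))"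
      unfolding d by (simp add: sum_distrib_left[symmetric] geometric_tail)
    also have "\<dots> \<le> 2 * real n * (1/2)^k" by (intro mult_left_mono) auto
    finally show ?thesis by (simp add: power_one_over)
  qed
  also have "real n * (occ_total K n / catalan n) \<le> real n * (2 * real n / 2^K)"
    using occ_mean_upper[of K n] assms by (intro mult_left_mono) auto
  finally show ?thesis by (simp add: power2_eq_square mult_ac)
qed

section \<open>The average of gamma is asymptotic to \<open>log\<^sub>2 n\<close>\<close>

lemma two_powr_le_power: "x \<le> real k \<Longrightarrow> 2 powr x \<le> (2::real)^k"
  by (metis powr_mono powr_realpow one_le_numeral zero_less_numeral)

lemma power_le_two_powr: "real k \<le> x \<Longrightarrow> (2::real)^k \<le> 2 powr x"
  by (metis powr_mono powr_realpow one_le_numeral zero_less_numeral)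

text \<open>Upper bound with \<open>k = \<lceil>L + sqrt L\<rceil>\<close> and \<open>K = \<lceil>3 L\<rceil>\<close>, where \<open>L = log\<^sub>2 n\<close>.\<close>

lemma avg_gamma_upper_log:
  fixes n :: nat
  defines "L \<equiv> log 2 (real n)"
  assumes L1: "1 \<le> L" and L2: "L + sqrt L + 2 \<le> 3 * L" and L3: "4 * (3 * L + 1) \<le> real n"
  shows "avg_gamma n \<le> L + sqrt L + 1 + 2 / 2 powr sqrt L + 2 / real n"
proof -
  have n0: "0 < real n" using L1 L3 by (smt (verit))
  have pL: "2 powr L = real n" using n0 by (simp add: L_def)
  define k where "k = nat \<lceil>L + sqrt L\<rceil>"
  define K where "K = nat \<lceil>3 * L\<rceil>"
  have sL: "0 \<le> sqrt L" using L1 by simp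
  have k: "L + sqrt L \<le> real k" "real k < L + sqrt L + 1" using L1 sL unfolding k_def by linarith+
  have K: "3 * L \<le> real K" "real K < 3 * L + 1" using L1 unfolding K_def by linarith+
  have "1 \<le> k" "k < K" using k K L1 L2 sL by linarith+
  moreover have "4 * K \<le> n"
    using K L3 by (simp flip: of_nat_le_iff)
  ultimately have bound: "avg_gamma n \<le> real k + 2 * real n / 2^k + 2 * (real n)^2 / 2^K"
    by (rule avg_gamma_upper_bound)
  have "real n * 2 powr sqrt L \<le> 2^k"
    using two_powr_le_power[OF k(1)] by (simp add: powr_add pL)
  then have e1: "2 * real n / 2^k \<le> 2 / 2 powr sqrt L" using n0 by (simp add: field_simps)
  have "2 powr (3 * L) = (real n)^3"
    by (simp add: powr_powr[symmetric] mult.commute[of 3] pL powr_numeral n0)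
  then have "(real n)^3 \<le> 2^K" using two_powr_le_power[OF K(1)] by simp
  then have e2: "2 * (real n)^2 / 2^K \<le> 2 / real n"
    using n0 by (simp add: field_simps power3_eq_cube power2_eq_square)
  show ?thesis using bound e1 e2 k by linarith
qed

text \<open>Lower bound with \<open>j = \<lfloor>L - sqrt L\<rfloor>\<close>.\<close>

lemma avg_gamma_lower_log:
  fixes n :: nat
  defines "L \<equiv> log 2 (real n)"
  assumes L0: "1 \<le> L" and L1: "3 \<le> L - sqrt L" and L2: "6 * L \<le> real n"
    and G0: "0 \<le> 2 - 1 / (1 - 3 * L / real n) - 2 / 2 powr sqrt L"
  shows "(L - sqrt L - 1) * (2 - 1 / (1 - 3 * L / real n) - 2 / 2 powr sqrt L) \<le> avg_gamma n"
proof -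
  have sL: "0 \<le> sqrt L" using L0 by simp
  have n0: "0 < real n" using L0 L2 by (smt (verit))
  have pL: "2 powr L = real n" using n0 by (simp add: L_def)
  define j where "j = nat \<lfloor>L - sqrt L\<rfloor>"
  have j: "real j \<le> L - sqrt L" "L - sqrt L - 1 < real j" using L1 unfolding j_def by linarith+
  have "real (4 * j) \<le> real n" using j(1) L0 L2 sL by linarith
  then have "4 * j \<le> n" by (simp only: of_nat_le_iff)
  moreover have "2 \<le> j" using j L1 by linarith
  ultimately have bound: "real j * (2 - 1 / (1 - 3 * real j / real n) - 2 * 2^j / real n) \<le> avg_gamma n"
    by (intro avg_gamma_lower_bound)
  have "2^j \<le> real n / 2 powr sqrt L"
    using power_le_two_powr[OF j(1)] by (simp add: powr_diff pL)
  then have e1: "2 * 2^j / real n \<le> 2 / 2 powr sqrt L" using n0 by (simp add: field_simps)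
  have "3 * L / real n < 1" using L0 L2 n0 by (simp add: divide_less_eq)
  then have p: "0 < 1 - 3 * L / real n" by linarith
  have "real j \<le> L" using j(1) sL by linarith
  then have "3 * real j / real n \<le> 3 * L / real n" using n0 by (intro divide_right_mono) auto
  then have e2: "1 / (1 - 3 * real j / real n) \<le> 1 / (1 - 3 * L / real n)"
    using p by (intro divide_left_mono) (auto intro: mult_pos_pos)
  have "(L - sqrt L - 1) * (2 - 1 / (1 - 3 * L / real n) - 2 / 2 powr sqrt L)
      \<le> real j * (2 - 1 / (1 - 3 * real j / real n) - 2 * 2^j / real n)"
    using e1 e2 j G0 by (intro mult_mono) auto
  then show ?thesis using bound by linarith
qed

lemma avg_gamma_asymp: "avg_gamma \<sim>[at_top] (\<lambda>n. log 2 (real n))"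
proof (rule asymp_equiv_sandwich_real)
  define L :: "nat \<Rightarrow> real" where "L n = log 2 (real n)" for n
  show "(\<lambda>n. (L n - sqrt (L n) - 1) * (2 - 1 / (1 - 3 * L n / real n) - 2 / 2 powr sqrt (L n)))
      \<sim>[at_top] (\<lambda>n. log 2 (real n))"
    unfolding L_def by real_asymp
  show "(\<lambda>n. L n + sqrt (L n) + 1 + 2 / 2 powr sqrt (L n) + 2 / real n) \<sim>[at_top] (\<lambda>n. log 2 (real n))"
    unfolding L_def by real_asymp
  have "eventually (\<lambda>n. 1 \<le> L n \<and> L n + sqrt (L n) + 2 \<le> 3 * L n \<and> 4 * (3 * L n + 1) \<le> real n
      \<and> 3 \<le> L n - sqrt (L n) \<and> 6 * L n \<le> real n
      \<and> 0 \<le> 2 - 1 / (1 - 3 * L n / real n) - 2 / 2 powr sqrt (L n)) at_top"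
    unfolding L_def by (intro eventually_conj; real_asymp)
  then show "eventually (\<lambda>n. avg_gamma n \<in>
      {(L n - sqrt (L n) - 1) * (2 - 1 / (1 - 3 * L n / real n) - 2 / 2 powr sqrt (L n))
       .. L n + sqrt (L n) + 1 + 2 / 2 powr sqrt (L n) + 2 / real n}) at_top"
    by eventually_elim (use avg_gamma_upper_log avg_gamma_lower_log in \<open>auto simp: L_def\<close>)
qed

section \<open>Taylor coefficients of \<open>U_tilde\<close>\<close>

definition c0 :: real where "c0 = 1/2 + 1 / (2 * sqrt 2)"
definition c1 :: real where "c1 = - 1 / sqrt 2 + 1/4"
definition c2 :: real where "c2 = 1 / (2 * ln 2)"

lemma U_tilde_eq:
  assumes "x < 1/4"
  shows "U_tilde x = c0 + c1 * (1 - 4*x) powr (1/2) + c2 * ((1 - 4*x) powr (1/2) * ln (1 - 4*x))"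
proof -
  have y: "0 < 1 - 4*x" using assms by simp
  then have "log 2 (sqrt (1 - 4*x)) = ln (1 - 4*x) / (2 * ln 2)"
    by (simp add: log_def ln_sqrt)
  then show ?thesis using y
    by (simp add: U_tilde_def c0_def c1_def c2_def powr_half_sqrt algebra_simps)
qed

text \<open>\<open>half_falling n = (1/2) (1/2 - 1) \<dots> (1/2 - n + 1)\<close>, and the harmonic-type sum arising
  from differentiating the logarithmic term.\<close>

definition half_falling :: "nat \<Rightarrow> real" where
  "half_falling n = (\<Prod>k<n. 1/2 - real k)"

definition half_harm :: "nat \<Rightarrow> real" where
  "half_harm n = (\<Sum>k<n. 1 / (real k - 1/2))"

lemma sqrt_coeff_eq: "sqrt_coeff n = (-4)^n * half_falling n / fact n"
  by (simp add: sqrt_coeff_def gbinomial_prod_rev half_falling_def atLeast0LessThan)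

definition U_deriv :: "nat \<Rightarrow> real \<Rightarrow> real" where
  "U_deriv n x = of_bool (n = 0) * c0 + (-4)^n * half_falling n *
     ((c1 - c2 * half_harm n) * (1 - 4*x) powr (1/2 - real n)
      + c2 * ((1 - 4*x) powr (1/2 - real n) * ln (1 - 4*x)))"

lemma has_derivative_powr:
  assumes "x < 1/4"
  shows "((\<lambda>x. (1 - 4*x) powr b) has_real_derivative (-4) * (b * (1 - 4*x) powr (b - 1))) (at x)"
  using assms by (auto intro!: derivative_eq_intros)

lemma has_derivative_powr_ln:
  assumes "x < 1/4"
  shows "((\<lambda>x. (1 - 4*x) powr b * ln (1 - 4*x)) has_real_derivative
     (-4) * (b * (1 - 4*x) powr (b - 1) * ln (1 - 4*x) + (1 - 4*x) powr (b - 1))) (at x)"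
proof -
  have y: "0 < 1 - 4*x" using assms by simp
  have "(1 - 4*x) powr b / (1 - 4*x) = (1 - 4*x) powr (b - 1)"
    using y by (simp add: powr_diff)
  then show ?thesis using assms
    by (auto intro!: derivative_eq_intros simp: field_simps)
qed

lemma U_deriv_has_derivative:
  assumes "x < 1/4"
  shows "(U_deriv n has_real_derivative U_deriv (Suc n) x) (at x)"
proof -
  define b where "b = 1/2 - real n"
  define y where "y = (1 - 4*x) powr (b - 1)"
  have b0: "b \<noteq> 0"
  proof
    assume "b = 0"
    then have "real (2 * n) = 1" by (simp add: b_def)
    then show False by (simp only: of_nat_eq_1_iff) presburger
  qed
  have "real n - 1/2 = - b" by (simp add: b_def)
  then have "1 / (real n - 1/2) = - (1 / b)" by simp
  then have step: "half_falling (Suc n) = half_falling n * b" "half_harm (Suc n) = half_harm n - 1 / b"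
    by (simp_all add: half_falling_def half_harm_def b_def)
  have exponent: "1/2 - real (Suc n) = b - 1" by (simp add: b_def)
  have "U_deriv n = (\<lambda>x. of_bool (n = 0) * c0 + (-4)^n * half_falling n *
      ((c1 - c2 * half_harm n) * (1 - 4*x) powr b + c2 * ((1 - 4*x) powr b * ln (1 - 4*x))))"
    by (simp add: U_deriv_def b_def fun_eq_iff)
  moreover have "((\<lambda>x. of_bool (n = 0) * c0 + (-4)^n * half_falling n *
      ((c1 - c2 * half_harm n) * (1 - 4*x) powr b + c2 * ((1 - 4*x) powr b * ln (1 - 4*x))))
    has_real_derivative 0 + (-4)^n * half_falling n * ((c1 - c2 * half_harm n) * ((-4) * (b * y))
      + c2 * ((-4) * (b * y * ln (1 - 4*x) + y)))) (at x)"
    unfolding y_def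
    by (intro DERIV_add DERIV_const DERIV_cmult has_derivative_powr[OF assms]
        has_derivative_powr_ln[OF assms])
  moreover have "(-4)^n * half_falling n * ((c1 - c2 * half_harm n) * ((-4) * (b * y))
      + c2 * ((-4) * (b * y * ln (1 - 4*x) + y))) = U_deriv (Suc n) x"
    unfolding U_deriv_def step exponent y_def using b0 by (simp add: field_simps)
  ultimately show ?thesis by simp
qed

lemma U_tilde_higher_deriv: "x < 1/4 \<Longrightarrow> (deriv ^^ n) U_tilde x = U_deriv n x"
proof (induction n arbitrary: x)
  case 0
  then show ?case by (simp add: U_deriv_def U_tilde_eq half_falling_def half_harm_def)
next
  case (Suc n)
  have "((deriv ^^ n) U_tilde has_real_derivative U_deriv (Suc n) x) (at x)"
  proof (rule has_field_derivative_transform_within_open[OF U_deriv_has_derivative[OF Suc.prems]])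
    show "open {..<(1/4::real)}" "x \<in> {..<1/4}" using Suc.prems by auto
    show "\<And>y. y \<in> {..<1/4} \<Longrightarrow> U_deriv n y = (deriv ^^ n) U_tilde y" using Suc.IH by simp
  qed
  then show ?case by (simp add: DERIV_imp_deriv)
qed

lemma taylor_coeff_U_tilde:
  "1 \<le> n \<Longrightarrow> taylor_coeff U_tilde n = sqrt_coeff n * (c1 - c2 * half_harm n)"
  by (simp add: taylor_coeff_def U_tilde_higher_deriv U_deriv_def sqrt_coeff_eq)

lemma taylor_coeff_ratio:
  assumes "1 \<le> n"
  shows "taylor_coeff U_tilde n / real (card (trees n)) = -2 * c1 + half_harm n / ln 2"
proof -
  have C: "real (card (trees n)) = - sqrt_coeff n / 2"
    using catalan_closed[of n] assms by (simp add: catalan_def)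
  moreover have "sqrt_coeff n \<noteq> 0" using catalan_pos[OF assms] C by (simp add: catalan_def)
  ultimately show ?thesis
    unfolding C using assms by (simp add: taylor_coeff_U_tilde c2_def field_simps)
qed

text \<open>\<open>half_harm n = ln n + O(1)\<close>, by comparison with the harmonic numbers.\<close>

lemma half_harm_lower: "harm m - 2 \<le> half_harm (Suc m)"
proof (induction m)
  case (Suc m)
  have "1 / real (Suc m) \<le> 1 / (real (Suc m) - 1/2)"
    by (intro divide_left_mono) auto
  then show ?case using Suc by (simp add: half_harm_def harm_Suc inverse_eq_divide)
qed (simp add: half_harm_def harm_def)

lemma half_harm_upper: "half_harm (Suc (Suc m)) \<le> harm m"
proof (induction m)
  case (Suc m)
  have "1 / (real (Suc (Suc m)) - 1/2) \<le> 1 / real (Suc m)"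
    by (intro divide_left_mono) auto
  then show ?case using Suc by (simp add: half_harm_def harm_Suc inverse_eq_divide)
qed (simp add: half_harm_def harm_def)

lemma harm_le_ln_euler: "1 \<le> k \<Longrightarrow> harm k \<le> ln (real (Suc k)) + euler_mascheroni"
proof -
  assume "1 \<le> k"
  then have "harm k - ln (real (Suc k)) + inverse (real (2 * (k + 1))) \<le> euler_mascheroni"
    using euler_mascheroni_bounds[of k] by (simp only: atLeastAtMost_iff)
  moreover have "0 < inverse (real (2 * (k + 1)))" by simp
  ultimately show ?thesis by linarith
qed

lemma half_harm_bounds:
  assumes "2 \<le> n"
  shows "ln (real n) - 2 \<le> half_harm n" "half_harm n \<le> ln (real n) + euler_mascheroni"
proof -
  obtain m where m: "n = Suc (Suc m)" using assms by (metis add_2_eq_Suc le_Suc_ex)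
  show "ln (real n) - 2 \<le> half_harm n"
    using half_harm_lower[of "Suc m"] ln_le_harm[of "Suc m"] by (simp add: m add.commute)
  have "half_harm n \<le> harm m" using half_harm_upper[of m] by (simp add: m)
  also have "\<dots> \<le> harm (Suc m)" by (rule harm_mono) simp
  also have "\<dots> \<le> ln (real n) + euler_mascheroni"
    using harm_le_ln_euler[of "Suc m"] by (simp add: m)
  finally show "half_harm n \<le> ln (real n) + euler_mascheroni" .
qed

lemma taylor_coeff_ratio_asymp:
  "(\<lambda>n. taylor_coeff U_tilde n / real (card (trees n))) \<sim>[at_top] (\<lambda>n. log 2 (real n))"
proof (rule asymp_equiv_sandwich_real)
  show "(\<lambda>n. log 2 (real n) + (-2 * c1 - 2 / ln 2)) \<sim>[at_top] (\<lambda>n. log 2 (real n))"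
    by real_asymp
  show "(\<lambda>n. log 2 (real n) + (-2 * c1 + euler_mascheroni / ln 2)) \<sim>[at_top] (\<lambda>n. log 2 (real n))"
    by real_asymp
  show "eventually (\<lambda>n. taylor_coeff U_tilde n / real (card (trees n))
      \<in> {log 2 (real n) + (-2 * c1 - 2 / ln 2) .. log 2 (real n) + (-2 * c1 + euler_mascheroni / ln 2)})
      at_top"
    using eventually_ge_at_top[of "2::nat"]
  proof eventually_elim
    case (elim n)
    have "(ln (real n) - 2) / ln 2 \<le> half_harm n / ln 2"
      "half_harm n / ln 2 \<le> (ln (real n) + euler_mascheroni) / ln 2"
      using half_harm_bounds[OF elim] by (intro divide_right_mono; simp)+
    then show ?case
      using taylor_coeff_ratio[of n] elim by (simp add: log_def diff_divide_distrib add_divide_distrib)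
  qed
qed

theorem proposition3:
  shows "avg_gamma \<sim>[at_top] (\<lambda>n. taylor_coeff U_tilde n / real (card (trees n)))"
  using avg_gamma_asymp asymp_equiv_symI[OF taylor_coeff_ratio_asymp] by (rule asymp_equiv_trans)

end
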